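(* Let $n,k$ be integers with $2\le k\le n$, and let $M\in\mathcal{S}^{n,k}$ have smallest eigenvalue $-\lambda_1<0$. Then $$\mathrm{dist}_F(M,\mathcal{S}^n_+)\le\sqrt{n-k}\cdot\lambda_1.$$
   Context: $\mathcal{S}^n_+$ denotes the cone of $n\times n$ real symmetric positive semidefinite (PSD) matrices. For integers $2\le k\le n$, the $k$-PSD closure $\mathcal{S}^{n,k}$ is the set of all $n\times n$ real symmetric matrices all of whose $k\times k$ principal submatrices are PSD. $\mathrm{dist}_F(M,\mathcal{S}^n_+)=\inf_{N\in\mathcal{S}^n_+}\|M-N\|_F$ with $\|\cdot\|_F$ the Frobenius norm. *)

theory Defs
  imports "HOL-Analysis.Analysis"
begin

text \<open>n x n real matrices are modelled as real^'n^'n with n = CARD('n).\<close>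

definition symmetric_mat :: "real^'n^'n \<Rightarrow> bool" where
  "symmetric_mat M \<longleftrightarrow> transpose M = M"

definition psd_cone :: "(real^'n^'n) set" where
  "psd_cone = {M. symmetric_mat M \<and> (\<forall>x::real^'n. 0 \<le> x \<bullet> (M *v x))}"

definition principal_submatrix_psd :: "real^'n^'n \<Rightarrow> 'n set \<Rightarrow> bool" where
  "principal_submatrix_psd M S \<longleftrightarrow>
     (\<forall>x::'n \<Rightarrow> real. 0 \<le> (\<Sum>i\<in>S. \<Sum>j\<in>S. x i * M$i$j * x j))"

definition k_psd_closure :: "nat \<Rightarrow> (real^'n^'n) set" where
  "k_psd_closure k = {M. symmetric_mat M \<and>
     (\<forall>S. card S = k \<longrightarrow> principal_submatrix_psd M S)}"

definition is_eigenvalue :: "real^'n^'n \<Rightarrow> real \<Rightarrow> bool" where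
  "is_eigenvalue M \<mu> \<longleftrightarrow> (\<exists>v. v \<noteq> 0 \<and> M *v v = \<mu> *\<^sub>R v)"

definition smallest_eigenvalue :: "real^'n^'n \<Rightarrow> real \<Rightarrow> bool" where
  "smallest_eigenvalue M \<mu> \<longleftrightarrow> is_eigenvalue M \<mu> \<and> (\<forall>\<nu>. is_eigenvalue M \<nu> \<longrightarrow> \<mu> \<le> \<nu>)"

definition frobenius_norm :: "real^'n^'n \<Rightarrow> real" where
  "frobenius_norm M = sqrt (\<Sum>i\<in>UNIV. \<Sum>j\<in>UNIV. (M$i$j)^2)"

definition distF_psd :: "real^'n^'n \<Rightarrow> real" where
  "distF_psd M = (INF N\<in>psd_cone. frobenius_norm (M - N))"

end

theory Submission
  imports Defs
begin

(*
  No spectral theorem is needed. Among the M-invariant subspaces W such that M is positive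
  semidefinite on the orthogonal complement of W, one of least dimension is negative definite
  for M: otherwise the top eigenvector of M on W (a minimiser of the Rayleigh quotient of -M)
  could be split off. Since all k x k principal submatrices are PSD, such a W meets every
  k-dimensional coordinate subspace only in 0, so dim W <= n - k. Invariance kills the cross
  terms between W and its complement, and x' M x >= -lambda1 |x|^2, so adding lambda1 times
  the orthogonal projection onto W makes M positive semidefinite; that perturbation has
  Frobenius norm lambda1 sqrt (dim W).
*)

lemma matrix_vector_mult_uminus_left: "(- A) *v x = - (A *v (x::real^'n))"
  by (simp add: matrix_vector_mult_def vec_eq_iff sum_negf)

lemma symmetric_mat_uminus: "symmetric_mat A \<Longrightarrow> symmetric_mat (- A)"
  by (simp add: symmetric_mat_def transpose_def vec_eq_iff)

lemma symmetric_mat_inner_commute: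
  assumes "symmetric_mat A"
  shows "x \<bullet> (A *v y) = y \<bullet> (A *v (x::real^'n))"
  by (metis assms dot_lmul_matrix inner_commute symmetric_mat_def vector_transpose_matrix)

lemma quadratic_form_eq_double_sum:
  "x \<bullet> (A *v x) = (\<Sum>i\<in>UNIV. \<Sum>j\<in>UNIV. x$i * A$i$j * (x::real^'n)$j)"
  by (simp add: inner_vec_def matrix_vector_mult_def sum_distrib_left mult.assoc)

lemma quadratic_form_add:
  assumes "symmetric_mat A"
  shows "(x + y) \<bullet> (A *v (x + y)) = x \<bullet> (A *v x) + 2 * (x \<bullet> (A *v y)) + y \<bullet> (A *v (y::real^'n))"
  using symmetric_mat_inner_commute[OF assms, of x y]
  by (simp add: matrix_vector_right_distrib inner_add_left inner_add_right)

lemma quadratic_form_scaleR: "(c *\<^sub>R x) \<bullet> (A *v (c *\<^sub>R x)) = c\<^sup>2 * (x \<bullet> (A *v (x::real^'n)))"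
  by (simp add: matrix_vector_mult_scaleR power2_eq_square)

lemma quadratic_nonneg_imp_linear_coeff_eq_0:
  fixes a c :: real
  assumes "0 \<le> c" and nonneg: "\<And>t. 0 \<le> 2 * t * a + t\<^sup>2 * c"
  shows "a = 0"
proof (rule ccontr)
  assume "a \<noteq> 0"
  define t where "t = - a / (c + 1)"
  have "2 * t * a + t\<^sup>2 * c \<le> 2 * t * a + t\<^sup>2 * (c + 1)" by (simp add: mult_left_mono)
  also have "\<dots> = t * (2 * a + t * (c + 1))" by (simp add: power2_eq_square algebra_simps)
  also have "\<dots> = t * a" using \<open>0 \<le> c\<close> by (simp add: t_def)
  also have "\<dots> = - (a\<^sup>2 / (c + 1))" by (simp add: t_def power2_eq_square)
  also have "\<dots> < 0" using \<open>0 \<le> c\<close> \<open>a \<noteq> 0\<close> by simp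
  finally show False using nonneg[of t] by simp
qed

lemma rayleigh_minimiser_residual_orthogonal:
  fixes A :: "real^'n^'n"
  assumes sym: "symmetric_mat A" and V: "subspace V" and v: "v \<in> V" "norm v = 1"
    and lower: "\<And>x. x \<in> V \<Longrightarrow> (v \<bullet> (A *v v)) * (norm x)\<^sup>2 \<le> x \<bullet> (A *v x)"
    and w: "w \<in> V"
  shows "w \<bullet> (A *v v - (v \<bullet> (A *v v)) *\<^sub>R v) = 0"
proof -
  define \<mu> where "\<mu> = v \<bullet> (A *v v)"
  have "0 \<le> 2 * t * (w \<bullet> (A *v v) - \<mu> * (v \<bullet> w)) + t\<^sup>2 * (w \<bullet> (A *v w) - \<mu> * (norm w)\<^sup>2)"
    for t
  proof -
    have "v + t *\<^sub>R w \<in> V" using v w V by (simp add: subspace_add subspace_scale)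
    then have "\<mu> * (norm (v + t *\<^sub>R w))\<^sup>2 \<le> (v + t *\<^sub>R w) \<bullet> (A *v (v + t *\<^sub>R w))"
      unfolding \<mu>_def by (rule lower)
    moreover have "(norm (v + t *\<^sub>R w))\<^sup>2 = 1 + 2 * t * (v \<bullet> w) + t\<^sup>2 * (norm w)\<^sup>2"
      using \<open>norm v = 1\<close> unfolding power2_norm_eq_inner norm_eq_1
      by (simp add: inner_commute power2_eq_square algebra_simps)
    moreover have "(v + t *\<^sub>R w) \<bullet> (A *v (v + t *\<^sub>R w))
        = \<mu> + 2 * t * (w \<bullet> (A *v v)) + t\<^sup>2 * (w \<bullet> (A *v w))"
      using symmetric_mat_inner_commute[OF sym, of v w]
      by (simp add: \<mu>_def quadratic_form_add[OF sym] quadratic_form_scaleR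
          matrix_vector_mult_scaleR power2_eq_square)
    ultimately show ?thesis by (simp add: algebra_simps)
  qed
  moreover have "0 \<le> w \<bullet> (A *v w) - \<mu> * (norm w)\<^sup>2" using lower[OF w] by (simp add: \<mu>_def)
  ultimately have "w \<bullet> (A *v v) - \<mu> * (v \<bullet> w) = 0"
    using quadratic_nonneg_imp_linear_coeff_eq_0 by blast
  then show ?thesis by (simp add: \<mu>_def inner_diff_right inner_commute)
qed

lemma symmetric_invariant_subspace_min_eigenvector:
  fixes A :: "real^'n^'n"
  assumes sym: "symmetric_mat A" and V: "subspace V" "V \<noteq> {0}"
    and invariant: "\<And>x. x \<in> V \<Longrightarrow> A *v x \<in> V"
  obtains v \<mu> where "v \<in> V" "norm v = 1" "A *v v = \<mu> *\<^sub>R v"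
    "\<And>x. x \<in> V \<Longrightarrow> \<mu> * (norm x)\<^sup>2 \<le> x \<bullet> (A *v x)"
proof -
  define f where "f x = x \<bullet> (A *v x)" for x :: "real^'n"
  have "compact (V \<inter> sphere 0 1)"
    by (intro closed_Int_compact closed_subspace V compact_sphere)
  moreover have "V \<inter> sphere 0 1 \<noteq> {}"
  proof -
    obtain x where "x \<in> V" "x \<noteq> 0" using V subspace_0 by blast
    then have "x /\<^sub>R norm x \<in> V \<inter> sphere 0 1" using V by (simp add: subspace_scale)
    then show ?thesis by blast
  qed
  moreover have "continuous_on (V \<inter> sphere 0 1) f"
    unfolding f_def quadratic_form_eq_double_sum by (intro continuous_intros)
  ultimately obtain v where v: "v \<in> V" "norm v = 1"
    and vmin: "\<And>y. y \<in> V \<Longrightarrow> norm y = 1 \<Longrightarrow> f v \<le> f y"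
    using continuous_attains_inf by fastforce
  have lower: "f v * (norm x)\<^sup>2 \<le> f x" if "x \<in> V" for x
  proof (cases "x = 0")
    case False
    have "f v \<le> f (x /\<^sub>R norm x)" using vmin that False V by (simp add: subspace_scale)
    also have "\<dots> = (inverse (norm x))\<^sup>2 * f x" unfolding f_def by (rule quadratic_form_scaleR)
    finally show ?thesis using False by (simp add: field_simps)
  qed (simp add: f_def)
  then have "w \<bullet> (A *v v - f v *\<^sub>R v) = 0" if "w \<in> V" for w
    using rayleigh_minimiser_residual_orthogonal[OF sym V(1) v _ that] by (simp add: f_def)
  moreover have "A *v v - f v *\<^sub>R v \<in> V" using invariant v V by (simp add: subspace_diff subspace_scale)
  ultimately have "A *v v = f v *\<^sub>R v" by fastforce
  with v lower show ?thesis using that unfolding f_def by blast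
qed

definition invariant_psd_complement :: "real^'n^'n \<Rightarrow> (real^'n) set \<Rightarrow> bool" where
  "invariant_psd_complement M W \<longleftrightarrow> subspace W \<and> (\<forall>x\<in>W. M *v x \<in> W) \<and>
     (\<forall>u. (\<forall>w\<in>W. orthogonal u w) \<longrightarrow> 0 \<le> u \<bullet> (M *v u))"

lemma invariant_psd_complement_UNIV: "invariant_psd_complement M UNIV"
  by (auto simp: invariant_psd_complement_def orthogonal_def)

lemma invariant_psd_complement_remove_eigenvector:
  assumes sym: "symmetric_mat M" and W: "invariant_psd_complement M W"
    and v: "v \<in> W" "norm v = 1" "M *v v = \<mu> *\<^sub>R v" and "0 \<le> \<mu>"
  shows "invariant_psd_complement M {y \<in> W. orthogonal y v}"
  unfolding invariant_psd_complement_def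
proof (intro conjI ballI allI impI)
  have subW: "subspace W" and invW: "\<And>x. x \<in> W \<Longrightarrow> M *v x \<in> W"
    and psdW: "\<And>u. \<forall>w\<in>W. orthogonal u w \<Longrightarrow> 0 \<le> u \<bullet> (M *v u)"
    using W by (auto simp: invariant_psd_complement_def)
  have vv: "v \<bullet> v = 1" using v by (simp add: norm_eq_1)
  show "subspace {y \<in> W. orthogonal y v}"
    using subW by (auto simp: subspace_def orthogonal_clauses)
  show "M *v y \<in> {y \<in> W. orthogonal y v}" if "y \<in> {y \<in> W. orthogonal y v}" for y
    using that invW symmetric_mat_inner_commute[OF sym, of v y] v
    by (simp add: orthogonal_def inner_commute)
  fix u assume u: "\<forall>w\<in>{y \<in> W. orthogonal y v}. orthogonal u w"
  define u' where "u' = u - (u \<bullet> v) *\<^sub>R v"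
  have "orthogonal u' w" if "w \<in> W" for w
  proof -
    have "w - (w \<bullet> v) *\<^sub>R v \<in> {y \<in> W. orthogonal y v}"
      using that v subW by (simp add: subspace_diff subspace_scale orthogonal_def inner_diff_left vv)
    then have "orthogonal u (w - (w \<bullet> v) *\<^sub>R v)" using u by blast
    then show ?thesis
      by (simp add: orthogonal_def u'_def inner_diff_left inner_diff_right vv inner_commute)
  qed
  then have "0 \<le> u' \<bullet> (M *v u')" using psdW by blast
  have "u' \<bullet> v = 0" by (simp add: u'_def inner_diff_left vv)
  have decomp: "u = u' + (u \<bullet> v) *\<^sub>R v" by (simp add: u'_def)
  have "u \<bullet> (M *v u) = u' \<bullet> (M *v u') + 2 * (u' \<bullet> (M *v ((u \<bullet> v) *\<^sub>R v)))
      + ((u \<bullet> v) *\<^sub>R v) \<bullet> (M *v ((u \<bullet> v) *\<^sub>R v))"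
    by (subst (1 2) decomp) (rule quadratic_form_add[OF sym])
  also have "\<dots> = u' \<bullet> (M *v u') + (u \<bullet> v)\<^sup>2 * \<mu>"
    using \<open>u' \<bullet> v = 0\<close>
    by (simp add: quadratic_form_scaleR matrix_vector_mult_scaleR v vv power2_eq_square)
  finally show "0 \<le> u \<bullet> (M *v u)"
    using \<open>0 \<le> u' \<bullet> (M *v u')\<close> \<open>0 \<le> \<mu>\<close> by simp
qed

lemma exists_negative_definite_invariant_psd_complement:
  fixes M :: "real^'n^'n"
  assumes sym: "symmetric_mat M"
  obtains W where "invariant_psd_complement M W" "\<And>x. x \<in> W \<Longrightarrow> x \<noteq> 0 \<Longrightarrow> x \<bullet> (M *v x) < 0"
proof -
  obtain W where W: "invariant_psd_complement M W"
    and least: "\<And>W'. invariant_psd_complement M W' \<Longrightarrow> dim W \<le> dim W'"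
    using ex_has_least_nat[of "invariant_psd_complement M", OF invariant_psd_complement_UNIV, of dim]
    by blast
  have subW: "subspace W" and invW: "\<And>x. x \<in> W \<Longrightarrow> M *v x \<in> W"
    using W by (auto simp: invariant_psd_complement_def)
  have "x \<bullet> (M *v x) < 0" if x: "x \<in> W" "x \<noteq> 0" for x
  proof (rule ccontr)
    assume "\<not> x \<bullet> (M *v x) < 0"
    \<comment> \<open>the largest eigenvalue of M on W is then nonnegative, and its eigenvector can be split off\<close>
    have "W \<noteq> {0}" using x by blast
    moreover have "(- M) *v y \<in> W" if "y \<in> W" for y
      using invW[OF that] subW by (simp add: matrix_vector_mult_uminus_left subspace_neg)
    ultimately obtain v \<nu> where v: "v \<in> W" "norm v = 1" "(- M) *v v = \<nu> *\<^sub>R v"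
      and max: "\<And>y. y \<in> W \<Longrightarrow> \<nu> * (norm y)\<^sup>2 \<le> y \<bullet> ((- M) *v y)"
      using symmetric_invariant_subspace_min_eigenvector[OF symmetric_mat_uminus[OF sym] subW]
      by blast
    have "M *v v = (- \<nu>) *\<^sub>R v" using v(3) matrix_vector_mult_uminus_left[of M v]
      by (metis minus_equation_iff scaleR_minus_left)
    moreover have "\<nu> * (norm x)\<^sup>2 \<le> 0"
      using max[OF \<open>x \<in> W\<close>] \<open>\<not> x \<bullet> (M *v x) < 0\<close> by (simp add: matrix_vector_mult_uminus_left)
    then have "0 \<le> - \<nu>" using \<open>x \<noteq> 0\<close> by (simp add: mult_le_0_iff)
    ultimately have W': "invariant_psd_complement M {y \<in> W. orthogonal y v}"
      by (rule invariant_psd_complement_remove_eigenvector[OF sym W v(1,2)])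
    have "\<not> orthogonal v v" using v(2) by (simp add: orthogonal_def norm_eq_1)
    then have "{y \<in> W. orthogonal y v} \<subset> W" using v(1) by blast
    moreover have "subspace {y \<in> W. orthogonal y v}"
      using W' by (simp add: invariant_psd_complement_def)
    ultimately have "dim {y \<in> W. orthogonal y v} < dim W"
      using subW by (intro dim_psubset) (simp add: span_eq_iff[THEN iffD2])
    then show False using least[OF W'] by simp
  qed
  then show ?thesis using W that by blast
qed

lemma smallest_eigenvalue_le_quadratic_form:
  fixes M :: "real^'n^'n"
  assumes sym: "symmetric_mat M" and "smallest_eigenvalue M \<mu>"
  shows "\<mu> * (norm x)\<^sup>2 \<le> x \<bullet> (M *v x)"
proof -
  have "axis undefined (1::real) \<noteq> 0" by (simp add: axis_eq_0_iff)
  then have "(UNIV :: (real^'n) set) \<noteq> {0}" by blast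
  then obtain v \<nu> where v: "norm v = 1" "M *v v = \<nu> *\<^sub>R v"
    and min: "\<And>y. y \<in> UNIV \<Longrightarrow> \<nu> * (norm y)\<^sup>2 \<le> y \<bullet> (M *v y)"
    using symmetric_invariant_subspace_min_eigenvector[OF sym subspace_UNIV] by blast
  have "is_eigenvalue M \<nu>" using v unfolding is_eigenvalue_def by (intro exI[of _ v]) auto
  then have "\<mu> * (norm x)\<^sup>2 \<le> \<nu> * (norm x)\<^sup>2"
    using assms(2) by (intro mult_right_mono) (simp_all add: smallest_eigenvalue_def)
  then show ?thesis using min[OF UNIV_I, of x] by linarith
qed

lemma quadratic_form_eq_principal_sum:
  assumes "\<And>i. i \<notin> S \<Longrightarrow> x$i = 0"
  shows "(\<Sum>i\<in>S. \<Sum>j\<in>S. x$i * M$i$j * x$j) = x \<bullet> (M *v (x::real^'n))"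
proof -
  have "(\<Sum>i\<in>S. \<Sum>j\<in>S. x$i * M$i$j * x$j) = (\<Sum>i\<in>S. \<Sum>j\<in>UNIV. x$i * M$i$j * x$j)"
    by (intro sum.cong refl sum.mono_neutral_left) (auto simp: assms)
  also have "\<dots> = (\<Sum>i\<in>UNIV. \<Sum>j\<in>UNIV. x$i * M$i$j * x$j)"
    by (intro sum.mono_neutral_left) (auto simp: assms)
  finally show ?thesis by (simp add: quadratic_form_eq_double_sum)
qed

lemma k_psd_closure_negative_definite_dim_le:
  fixes M :: "real^'n^'n"
  assumes "M \<in> k_psd_closure k" "k \<le> CARD('n)" and W: "subspace W"
    and neg: "\<And>x. x \<in> W \<Longrightarrow> x \<noteq> 0 \<Longrightarrow> x \<bullet> (M *v x) < 0"
  shows "dim W \<le> CARD('n) - k"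
proof -
  obtain S :: "'n set" where S: "card S = k"
    using obtain_subset_with_card_n[of k "UNIV :: 'n set"] assms(2) by metis
  define E where "E = {x::real^'n. \<forall>i. i \<notin> S \<longrightarrow> x$i = 0}"
  have E: "subspace E" by (auto simp: E_def subspace_def)
  have "vec.dim E = k" using dim_substandard_cart[of S] S by (simp add: E_def)
  then have "dim E = k" by (simp add: dim_vec_eq)
  have "W \<inter> E = {0}"
  proof (intro equalityI subsetI)
    fix x assume x: "x \<in> W \<inter> E"
    have "principal_submatrix_psd M S" using assms(1) S by (simp add: k_psd_closure_def)
    then have "0 \<le> (\<Sum>i\<in>S. \<Sum>j\<in>S. x$i * M$i$j * x$j)"
      unfolding principal_submatrix_psd_def by (rule spec)
    also have "\<dots> = x \<bullet> (M *v x)" using x by (intro quadratic_form_eq_principal_sum) (simp add: E_def)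
    finally have "0 \<le> x \<bullet> (M *v x)" .
    then show "x \<in> {0}" using neg[of x] x by fastforce
  qed (simp add: subspace_0 W E)
  then have "dim (W \<inter> E) = 0" by simp
  moreover have "dim {x + y |x y. x \<in> W \<and> y \<in> E} \<le> CARD('n)" by (rule dim_subset_UNIV_cart)
  ultimately show ?thesis using dim_sums_Int[OF W E] \<open>dim E = k\<close> by linarith
qed

definition proj_matrix :: "(real^'n) set \<Rightarrow> real^'n^'n" where
  "proj_matrix B = (\<chi> i j. \<Sum>b\<in>B. b$i * b$j)"

lemma proj_matrix_mult_vec: "proj_matrix B *v x = (\<Sum>b\<in>B. (b \<bullet> x) *\<^sub>R b)"
  by (simp add: proj_matrix_def matrix_vector_mult_def vec_eq_iff inner_vec_def
      sum_distrib_left sum_distrib_right sum.swap[of _ B] algebra_simps)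

lemma inner_proj_matrix_mult_vec:
  assumes "finite B" "pairwise orthogonal B" "\<And>b. b \<in> B \<Longrightarrow> norm b = 1" "c \<in> B"
  shows "c \<bullet> (proj_matrix B *v x) = c \<bullet> x"
proof -
  have "c \<bullet> (proj_matrix B *v x) = (\<Sum>b\<in>B. if b = c then c \<bullet> x else 0)"
    unfolding proj_matrix_mult_vec inner_sum_right using assms
    by (intro sum.cong refl) (auto simp: pairwise_def orthogonal_def inner_commute norm_eq_1)
  then show ?thesis using assms by simp
qed

lemma power2_norm_vec_eq_sum: "(norm x)\<^sup>2 = (\<Sum>i\<in>UNIV. (x$i)\<^sup>2)" for x :: "real^'n"
  unfolding power2_norm_eq_inner by (simp add: inner_vec_def power2_eq_square)

lemma frobenius_norm_proj_matrix:
  assumes "finite B" "pairwise orthogonal B" "\<And>b. b \<in> B \<Longrightarrow> norm b = 1"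
  shows "frobenius_norm (proj_matrix B) = sqrt (card B)"
proof -
  have row: "(\<Sum>j\<in>UNIV. (proj_matrix B $i$j)\<^sup>2) = (\<Sum>b\<in>B. (b$i)\<^sup>2)" for i
  proof -
    have "proj_matrix B $ i = (\<Sum>b\<in>B. (b$i) *\<^sub>R b)"
      by (simp add: proj_matrix_def vec_eq_iff)
    then have "(\<Sum>j\<in>UNIV. (proj_matrix B $i$j)\<^sup>2) = (norm (\<Sum>b\<in>B. (b$i) *\<^sub>R b))\<^sup>2"
      by (simp only: power2_norm_vec_eq_sum)
    also have "\<dots> = (\<Sum>b\<in>B. (b$i)\<^sup>2)"
      using assms by (simp add: norm_sum_Pythagorean pairwise_def orthogonal_clauses)
    finally show ?thesis .
  qed
  have "(\<Sum>i\<in>UNIV. \<Sum>j\<in>UNIV. (proj_matrix B $i$j)\<^sup>2) = (\<Sum>i\<in>UNIV. \<Sum>b\<in>B. (b$i)\<^sup>2)"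
    by (simp only: row)
  also have "\<dots> = (\<Sum>b\<in>B. (norm b)\<^sup>2)"
    by (subst sum.swap) (simp only: power2_norm_vec_eq_sum)
  also have "\<dots> = card B" using assms by simp
  finally show ?thesis by (simp add: frobenius_norm_def)
qed

lemma frobenius_norm_scaleR: "frobenius_norm (c *\<^sub>R A) = \<bar>c\<bar> * frobenius_norm A"
  by (simp add: frobenius_norm_def power_mult_distrib sum_distrib_left[symmetric] real_sqrt_mult)

lemma distF_psd_le_frobenius_norm: "N \<in> psd_cone \<Longrightarrow> distF_psd M \<le> frobenius_norm (M - N)"
  unfolding distF_psd_def
  by (rule cINF_lower) (auto simp: frobenius_norm_def intro!: bdd_belowI[of _ 0] sum_nonneg)

lemma proj_matrix_add_psd_cone:
  fixes M :: "real^'n^'n"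
  assumes sym: "symmetric_mat M" and W: "invariant_psd_complement M (span B)"
    and B: "finite B" "pairwise orthogonal B" "\<And>b. b \<in> B \<Longrightarrow> norm b = 1"
    and lower: "\<And>w. w \<in> span B \<Longrightarrow> - c * (norm w)\<^sup>2 \<le> w \<bullet> (M *v w)"
  shows "M + c *\<^sub>R proj_matrix B \<in> psd_cone"
proof -
  have "symmetric_mat (M + c *\<^sub>R proj_matrix B)"
    using sym by (auto simp: symmetric_mat_def proj_matrix_def transpose_def vec_eq_iff mult.commute)
  moreover have "0 \<le> x \<bullet> ((M + c *\<^sub>R proj_matrix B) *v x)" for x
  proof -
    define w where "w = proj_matrix B *v x"
    define u where "u = x - w"
    have w: "w \<in> span B"
      unfolding w_def proj_matrix_mult_vec by (intro span_sum span_scale span_base)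
    have "orthogonal u b" if "b \<in> B" for b
    proof -
      have "b \<bullet> u = 0"
        by (simp add: u_def w_def inner_diff_right inner_proj_matrix_mult_vec[OF B that])
      then show ?thesis by (simp add: orthogonal_def inner_commute)
    qed
    then have u: "orthogonal u y" if "y \<in> span B" for y
      using orthogonal_to_span that by blast
    have "M *v w \<in> span B" using W w by (simp add: invariant_psd_complement_def)
    then have "x \<bullet> (M *v x) = w \<bullet> (M *v w) + u \<bullet> (M *v u)"
      using quadratic_form_add[OF sym, of w u] u symmetric_mat_inner_commute[OF sym, of w u]
      by (simp add: u_def orthogonal_def)
    moreover have "x \<bullet> w = (norm w)\<^sup>2"
      using u[OF w] by (simp add: u_def orthogonal_def power2_norm_eq_inner inner_diff_left)
    moreover have "0 \<le> u \<bullet> (M *v u)"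
      using W u by (simp add: invariant_psd_complement_def)
    ultimately show ?thesis using lower[OF w]
      by (simp add: matrix_vector_mult_add_rdistrib scaleR_matrix_vector_assoc[symmetric]
          inner_add_right w_def[symmetric])
  qed
  ultimately show ?thesis by (simp add: psd_cone_def)
qed

theorem proposition3:
  fixes M :: "real^'n^'n" and k :: nat and lambda1 :: real
  assumes "2 \<le> k" and "k \<le> CARD('n)"
    and "M \<in> k_psd_closure k"
    and "smallest_eigenvalue M (- lambda1)" and "- lambda1 < 0"
  shows "distF_psd M \<le> sqrt (real (CARD('n) - k)) * lambda1"
proof -
  have sym: "symmetric_mat M" using assms(3) by (simp add: k_psd_closure_def)
  obtain W where W: "invariant_psd_complement M W"
    and neg: "\<And>x. x \<in> W \<Longrightarrow> x \<noteq> 0 \<Longrightarrow> x \<bullet> (M *v x) < 0"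
    using exists_negative_definite_invariant_psd_complement[OF sym] by blast
  have "subspace W" using W by (simp add: invariant_psd_complement_def)
  then obtain B where B: "pairwise orthogonal B" "\<And>b. b \<in> B \<Longrightarrow> norm b = 1"
    and "independent B" "card B = dim W" "span B = W"
    using orthonormal_basis_subspace by blast
  have "finite B" using \<open>independent B\<close> by (rule independent_imp_finite)
  have "M + lambda1 *\<^sub>R proj_matrix B \<in> psd_cone"
    using sym W \<open>finite B\<close> B smallest_eigenvalue_le_quadratic_form[OF sym assms(4)]
    by (intro proj_matrix_add_psd_cone) (simp_all add: \<open>span B = W\<close>)
  then have "distF_psd M \<le> frobenius_norm (M - (M + lambda1 *\<^sub>R proj_matrix B))"
    by (rule distF_psd_le_frobenius_norm)
  also have "M - (M + lambda1 *\<^sub>R proj_matrix B) = (- lambda1) *\<^sub>R proj_matrix B" by simp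
  also have "frobenius_norm \<dots> = \<bar>- lambda1\<bar> * sqrt (card B)"
    by (simp only: frobenius_norm_scaleR frobenius_norm_proj_matrix[OF \<open>finite B\<close> B])
  also have "\<dots> = lambda1 * sqrt (dim W)" using assms(5) \<open>card B = dim W\<close> by simp
  also have "\<dots> \<le> sqrt (real (CARD('n) - k)) * lambda1"
    using k_psd_closure_negative_definite_dim_le[OF assms(3,2) \<open>subspace W\<close> neg] assms(5)
    by (simp add: mult.commute)
  finally show ?thesis .
qed

end
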